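(* Let $G$ be a finite group and let $\mathcal{C}$ be a cycle of $\mathcal{P}(G)$. Then there exists a cycle $\mathcal{C}'$ of $\mathcal{P}(G)$ whose vertex set contains that of $\mathcal{C}$ and such that $[x]_{\mathtt{N}}\subseteq V_{\mathcal{C}'}$ for every $x\in V_{\mathcal{C}'}$.
   Context: The power graph $\mathcal{P}(G)$ has vertex set $G$, and distinct $x,y$ are adjacent iff one is a positive integer power of the other. $N[x]$ is the closed neighbourhood of $x$ in $\mathcal{P}(G)$; $x\mathtt{N}y$ iff $N[x]=N[y]$, with class $[x]_{\mathtt{N}}$. A cycle is a subgraph whose $k\ge3$ distinct vertices can be arranged cyclically with consecutive vertices adjacent; $V_{\mathcal{C}}$ is its vertex set. *)

theory Defs
  imports "HOL-Algebra.Group"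
begin

text \<open>Power graph of a group G: vertex set carrier G; distinct x, y adjacent iff
  one is a positive integer power of the other.\<close>
definition pg_adj :: "('a, 'b) monoid_scheme \<Rightarrow> 'a \<Rightarrow> 'a \<Rightarrow> bool" where
  "pg_adj G x y \<longleftrightarrow> x \<in> carrier G \<and> y \<in> carrier G \<and> x \<noteq> y \<and>
     ((\<exists>n::nat. n > 0 \<and> y = x [^]\<^bsub>G\<^esub> n) \<or> (\<exists>n::nat. n > 0 \<and> x = y [^]\<^bsub>G\<^esub> n))"

definition pg_closed_nbhd :: "('a, 'b) monoid_scheme \<Rightarrow> 'a \<Rightarrow> 'a set" where
  "pg_closed_nbhd G x = {x} \<union> {y \<in> carrier G. pg_adj G x y}"

definition pg_N_class :: "('a, 'b) monoid_scheme \<Rightarrow> 'a \<Rightarrow> 'a set" where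
  "pg_N_class G x = {y \<in> carrier G. pg_closed_nbhd G y = pg_closed_nbhd G x}"

text \<open>A cycle, given by the cyclic list of its k \<ge> 3 distinct vertices,
  consecutive vertices (cyclically) adjacent. Its vertex set is set cs.\<close>
definition pg_cycle :: "('a, 'b) monoid_scheme \<Rightarrow> 'a list \<Rightarrow> bool" where
  "pg_cycle G cs \<longleftrightarrow> length cs \<ge> 3 \<and> distinct cs \<and> set cs \<subseteq> carrier G \<and>
     (\<forall>i < length cs. pg_adj G (cs ! i) (cs ! ((i + 1) mod length cs)))"

end

theory Submission
  imports Defs
begin

text \<open>Two vertices in the same \<open>N\<close>-class are closed twins: they are adjacent and have
  the same further neighbours. Hence a twin \<open>y\<close> of a vertex \<open>x\<close> of a cycle can be spliced
  into the cycle between \<open>x\<close> and its predecessor. Repeating this until the vertex set is a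
  union of \<open>N\<close>-classes terminates because \<open>G\<close> is finite.\<close>

definition cyclically :: "('a \<Rightarrow> 'a \<Rightarrow> bool) \<Rightarrow> 'a list \<Rightarrow> bool" where
  "cyclically P xs \<longleftrightarrow> successively P (xs @ take 1 xs)"

lemma successively_conv_nth:
  "successively P xs \<longleftrightarrow> (\<forall>i. Suc i < length xs \<longrightarrow> P (xs ! i) (xs ! Suc i))"
proof (induction P xs rule: successively.induct)
  case (3 P x y xs)
  then show ?case
    by (auto simp: nth_Cons split: nat.splits)
qed simp_all

lemma cyclically_iff:
  "cyclically P xs \<longleftrightarrow> successively P xs \<and> (xs \<noteq> [] \<longrightarrow> P (last xs) (hd xs))"
  using successively_append_iff[of P xs "take 1 xs"] by (cases xs) (auto simp: cyclically_def)

lemma cyclically_conv_nth: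
  "cyclically P xs \<longleftrightarrow> (\<forall>i < length xs. P (xs ! i) (xs ! ((i + 1) mod length xs)))"
proof (cases "length xs")
  case (Suc m)
  then have "xs \<noteq> []"
    by auto
  then have "last xs = xs ! m" "hd xs = xs ! 0"
    using Suc by (simp_all add: last_conv_nth hd_conv_nth)
  moreover have "successively P xs \<longleftrightarrow> (\<forall>i < m. P (xs ! i) (xs ! Suc i))"
    using Suc by (auto simp: successively_conv_nth)
  ultimately show ?thesis
    using Suc by (auto simp: cyclically_iff All_less_Suc)
qed (simp add: cyclically_def)

lemma cyclically_rotate1: "cyclically P xs \<Longrightarrow> cyclically P (rotate1 xs)"
  by (cases xs) (auto simp: cyclically_iff successively_append_iff successively_Cons split: if_splits)

lemma cyclically_rotate: "cyclically P xs \<Longrightarrow> cyclically P (rotate n xs)"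
  by (induction n) (simp_all add: cyclically_rotate1)

lemma cyclically_Cons:
  assumes "cyclically P (x # xs)" "P y x" "P (last (x # xs)) y"
  shows "cyclically P (y # x # xs)"
  using assms by (simp add: cyclically_iff)

lemma pg_cycle_iff_cyclically:
  "pg_cycle G cs \<longleftrightarrow>
     3 \<le> length cs \<and> distinct cs \<and> set cs \<subseteq> carrier G \<and> cyclically (pg_adj G) cs"
  by (simp add: pg_cycle_def cyclically_conv_nth)

lemma pg_adj_sym: "pg_adj G x y \<Longrightarrow> pg_adj G y x"
  unfolding pg_adj_def by blast

lemma pg_N_class_subset_carrier: "pg_N_class G x \<subseteq> carrier G"
  unfolding pg_N_class_def by blast

lemma pg_adj_if_in_N_class:
  assumes "y \<in> pg_N_class G x" "y \<noteq> x"
  shows "pg_adj G x y"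
proof -
  have "y \<in> pg_closed_nbhd G y"
    unfolding pg_closed_nbhd_def by simp
  then have "y \<in> pg_closed_nbhd G x"
    using assms(1) unfolding pg_N_class_def by simp
  then show ?thesis
    using assms(2) unfolding pg_closed_nbhd_def by auto
qed

lemma pg_adj_N_class_twin:
  assumes "y \<in> pg_N_class G x" "pg_adj G x z" "z \<noteq> y"
  shows "pg_adj G y z"
proof -
  have "z \<in> pg_closed_nbhd G x"
    using assms(2) unfolding pg_closed_nbhd_def pg_adj_def by auto
  then have "z \<in> pg_closed_nbhd G y"
    using assms(1) unfolding pg_N_class_def by simp
  then show ?thesis
    using assms(3) unfolding pg_closed_nbhd_def by auto
qed

lemma pg_cycle_rotate: "pg_cycle G cs \<Longrightarrow> pg_cycle G (rotate n cs)"
  by (simp add: pg_cycle_iff_cyclically cyclically_rotate)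

lemma pg_cycle_Cons_N_class:
  assumes cyc: "pg_cycle G (x # xs)"
    and y: "y \<in> pg_N_class G x" "y \<notin> set (x # xs)"
  shows "pg_cycle G (y # x # xs)"
proof -
  have walk: "cyclically (pg_adj G) (x # xs)"
    using cyc by (simp add: pg_cycle_iff_cyclically)
  have "pg_adj G y x"
    using y by (simp add: pg_adj_sym pg_adj_if_in_N_class)
  moreover have "pg_adj G (last (x # xs)) y"
  proof -
    have "pg_adj G x (last (x # xs))"
      using walk by (simp add: cyclically_iff pg_adj_sym)
    moreover have "last (x # xs) \<noteq> y"
      using y(2) last_in_set[of "x # xs"] by auto
    ultimately show ?thesis
      using y(1) by (simp add: pg_adj_sym pg_adj_N_class_twin)
  qed
  ultimately have "cyclically (pg_adj G) (y # x # xs)"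
    by (rule cyclically_Cons[OF walk])
  then show ?thesis
    using cyc y pg_N_class_subset_carrier[of G x] by (auto simp: pg_cycle_iff_cyclically)
qed

lemma pg_cycle_insert_N_class:
  assumes "pg_cycle G C" "x \<in> set C" "y \<in> pg_N_class G x" "y \<notin> set C"
  obtains C' where "pg_cycle G C'" "set C' = insert y (set C)"
proof -
  obtain us vs where C: "C = us @ x # vs"
    using assms(2) by (meson in_set_conv_decomp)
  have "rotate (length us) C = x # vs @ us"
    unfolding C by (simp add: rotate_append)
  then have "pg_cycle G (x # vs @ us)"
    using pg_cycle_rotate[OF assms(1)] by metis
  then have "pg_cycle G (y # x # vs @ us)"
    using assms(3,4) C by (intro pg_cycle_Cons_N_class) auto
  then show ?thesis
    by (rule that) (auto simp: C)
qed

lemma pg_cycle_extend_N_closed: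
  assumes "finite (carrier G)" "pg_cycle G C"
  shows "\<exists>C'. pg_cycle G C' \<and> set C \<subseteq> set C' \<and> (\<forall>x \<in> set C'. pg_N_class G x \<subseteq> set C')"
  using assms(2)
proof (induction "card (carrier G - set C)" arbitrary: C rule: less_induct)
  case less
  show ?case
  proof (cases "\<forall>x \<in> set C. pg_N_class G x \<subseteq> set C")
    case True
    then show ?thesis
      using less.prems by blast
  next
    case False
    then obtain x y where xy: "x \<in> set C" "y \<in> pg_N_class G x" "y \<notin> set C"
      by blast
    obtain C2 where C2: "pg_cycle G C2" "set C2 = insert y (set C)"
      using pg_cycle_insert_N_class[OF less.prems xy] .
    have "y \<in> carrier G - set C"
      using xy pg_N_class_subset_carrier by fast
    moreover have "carrier G - set C2 = (carrier G - set C) - {y}"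
      using C2(2) by auto
    ultimately have "card (carrier G - set C2) < card (carrier G - set C)"
      using assms(1) by (metis card_Diff1_less finite_Diff)
    then obtain C' where "pg_cycle G C'" "set C2 \<subseteq> set C'"
        "\<forall>x \<in> set C'. pg_N_class G x \<subseteq> set C'"
      using less.hyps C2(1) by blast
    then show ?thesis
      using C2(2) by blast
  qed
qed

theorem mainTheorem6:
  fixes G :: "('a, 'b) monoid_scheme" and C :: "'a list"
  assumes "group G" and "finite (carrier G)" and "pg_cycle G C"
  shows "\<exists>C'. pg_cycle G C' \<and> set C \<subseteq> set C' \<and>
           (\<forall>x \<in> set C'. pg_N_class G x \<subseteq> set C')"
  using pg_cycle_extend_N_closed[OF assms(2,3)] .

end
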